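(* Let $h$ and $k$ be relatively prime odd integers with $k>0$. Then $$B_{1}(h,k)=\frac{h}{4k}\,Y(h,k)+\frac{1}{2k}-\frac{1}{2}.$$
   Context: $[x]$ denotes the greatest integer $\le x$, and $((x))=x-[x]-\tfrac12$ if $x\notin\mathbb{Z}$, $((x))=0$ if $x\in\mathbb{Z}$. For integers $h,k$ with $k>0$, $\gcd(h,k)=1$: $$B_{1}(h,k)=\sum_{j=1}^{k-1}(-1)^{j+\left[\frac{hj}{k}\right]}\left[\frac{hj}{k}\right],\qquad Y(h,k)=4k\sum_{j \bmod k}(-1)^{j+\left[\frac{hj}{k}\right]}\left(\left(\frac{j}{k}\right)\right),$$ the latter sum over a complete residue system modulo $k$ (the Simsek sum). *)

theory Defs
  imports Complex_Main
begin

definition sawtooth :: "real \<Rightarrow> real" where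
  "sawtooth x = (if x \<in> \<int> then 0 else x - of_int \<lfloor>x\<rfloor> - 1/2)"

definition B1 :: "int \<Rightarrow> int \<Rightarrow> real" where
  "B1 h k = (\<Sum>j\<in>{1..k-1}.
      (-1::real) powi (j + \<lfloor>real_of_int (h*j) / real_of_int k\<rfloor>)
      * of_int \<lfloor>real_of_int (h*j) / real_of_int k\<rfloor>)"

definition Y :: "int \<Rightarrow> int \<Rightarrow> real" where
  "Y h k = 4 * of_int k * (\<Sum>j\<in>{0..k-1}.
      (-1::real) powi (j + \<lfloor>real_of_int (h*j) / real_of_int k\<rfloor>)
      * sawtooth (real_of_int j / real_of_int k))"

end

theory Submission
  imports Defs
begin

text \<open>Since \<open>h\<close> and \<open>k\<close> are odd, the sign \<open>(-1)^(j + [hj/k])\<close> equals \<open>(-1)^r\<close> with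
  \<open>r = hj mod k\<close>, and \<open>[hj/k] = (hj - r)/k\<close>. As \<open>j \<mapsto> hj mod k\<close> permutes \<open>{1..k-1}\<close>,
  the sums of \<open>(-1)^r\<close> and \<open>(-1)^r r\<close> over \<open>j\<close> are the alternating sums \<open>0\<close> and
  \<open>(k-1)/2\<close> over \<open>r = 1..k-1\<close>. Hence \<open>B\<^sub>1(h,k)\<close> and \<open>Y(h,k)\<close> both reduce to the single
  unknown sum \<open>\<Sum> (-1)^r j\<close>, and eliminating it gives the identity.\<close>

lemma sum_minus_one_powi_upto_even:
  "(\<Sum>r\<in>{1..2 * int m}. (-1::'a::division_ring) powi r) = 0"
proof (induction m)
  case (Suc m)
  have "{1..2 * int (Suc m)} = insert (2 * int m + 2) (insert (2 * int m + 1) {1..2 * int m})"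
    by auto
  with Suc show ?case by (simp add: power_int_minus_left)
qed simp

lemma sum_minus_one_powi_times_upto_even:
  "(\<Sum>r\<in>{1..2 * int m}. (-1::'a::division_ring) powi r * of_int r) = of_nat m"
proof (induction m)
  case (Suc m)
  have "{1..2 * int (Suc m)} = insert (2 * int m + 2) (insert (2 * int m + 1) {1..2 * int m})"
    by auto
  with Suc show ?case by (simp add: power_int_minus_left)
qed simp

lemma bij_betw_mult_mod:
  fixes h k :: int
  assumes "coprime h k"
  shows "bij_betw (\<lambda>j. h * j mod k) {1..k-1} {1..k-1}"
proof -
  have dvd_mult_iff: "k dvd h * j \<longleftrightarrow> k dvd j" for j
    using assms by (simp add: coprime_commute coprime_dvd_mult_right_iff)
  have inj: "inj_on (\<lambda>j. h * j mod k) {1..k-1}"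
  proof
    fix i j assume ij: "i \<in> {1..k-1}" "j \<in> {1..k-1}" "h * i mod k = h * j mod k"
    then have "k dvd h * (i - j)"
      by (simp add: mod_eq_dvd_iff right_diff_distrib)
    then have "k dvd i - j" by (simp add: dvd_mult_iff)
    moreover have "\<bar>i - j\<bar> < k" using ij(1,2) by auto
    ultimately show "i = j" using dvd_imp_le_int[of "i - j" k] by force
  qed
  have "(\<lambda>j. h * j mod k) ` {1..k-1} \<subseteq> {1..k-1}"
  proof clarify
    fix j assume j: "j \<in> {1..k-1}"
    then have "\<not> k dvd j" using zdvd_imp_le by fastforce
    then have "h * j mod k \<noteq> 0" by (simp add: dvd_mult_iff dvd_eq_mod_eq_0 [symmetric])
    moreover have "0 \<le> h * j mod k" "h * j mod k < k" using j by auto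
    ultimately show "h * j mod k \<in> {1..k-1}" by simp
  qed
  with inj show ?thesis
    by (simp add: bij_betw_def endo_inj_surj)
qed

lemma minus_one_powi_add_div_odd:
  fixes h k j :: int
  assumes "odd h" "odd k"
  shows "(-1::'a::division_ring) powi (j + h * j div k) = (-1) powi (h * j mod k)"
proof -
  have "h * j = k * (h * j div k) + h * j mod k" by simp
  then have "even (j + h * j div k) \<longleftrightarrow> even (h * j mod k)"
    using assms by (metis even_add even_mult_iff)
  then show ?thesis by (simp add: power_int_minus_left)
qed

lemma sawtooth_unit_interval:
  assumes "0 < x" "x < 1"
  shows "sawtooth x = x - 1/2"
proof -
  have "x \<notin> \<int>" "\<lfloor>x\<rfloor> = 0"
    using assms by (auto simp: Ints_def floor_eq_iff)
  then show ?thesis by (simp add: sawtooth_def)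
qed

lemma B1_eq_sum_mod:
  fixes h k :: int
  assumes "odd h" "odd k" "k > 0"
  shows "B1 h k = (\<Sum>j\<in>{1..k-1}. (-1) powi (h * j mod k)
                     * (of_int h * of_int j - of_int (h * j mod k)) / of_int k)"
proof -
  have "of_int (h * j div k) = (of_int h * of_int j - of_int (h * j mod k)) / (of_int k :: real)"
    for j
  proof -
    have "real_of_int (h * j) = of_int k * of_int (h * j div k) + of_int (h * j mod k)"
      by (metis div_mult_mod_eq of_int_add of_int_mult mult.commute)
    with assms(3) show ?thesis by (simp add: field_simps)
  qed
  then show ?thesis
    unfolding B1_def floor_divide_of_int_eq
    by (simp add: minus_one_powi_add_div_odd [OF assms(1,2)])
qed

lemma Y_eq_sum_mod:
  fixes h k :: int
  assumes "odd h" "odd k" "k > 0"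
  shows "Y h k = 4 * (\<Sum>j\<in>{1..k-1}. (-1) powi (h * j mod k) * (of_int j - of_int k / 2))"
proof -
  have "{0..k-1} = insert 0 {1..k-1}" using assms(3) by auto
  then have "Y h k = 4 * of_int k * (\<Sum>j\<in>{1..k-1}.
      (-1) powi (j + h * j div k) * sawtooth (real_of_int j / real_of_int k))"
    unfolding Y_def floor_divide_of_int_eq
    by (simp add: sawtooth_def)
  also have "\<dots> = 4 * of_int k * (\<Sum>j\<in>{1..k-1}.
      (-1) powi (h * j mod k) * (of_int j - of_int k / 2) / of_int k)"
  proof (intro arg_cong [where f = "(*) _"] sum.cong)
    fix j assume "j \<in> {1..k-1}"
    then have "sawtooth (real_of_int j / real_of_int k) = (of_int j - of_int k / 2) / of_int k"
      using assms(3) by (subst sawtooth_unit_interval) (auto simp: field_simps)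
    then show "(-1) powi (j + h * j div k) * sawtooth (real_of_int j / real_of_int k)
        = (-1) powi (h * j mod k) * (of_int j - of_int k / 2) / of_int k"
      by (simp add: minus_one_powi_add_div_odd [OF assms(1,2)])
  qed simp
  also have "\<dots> = 4 * (\<Sum>j\<in>{1..k-1}. (-1) powi (h * j mod k) * (of_int j - of_int k / 2))"
    using assms(3) by (simp add: sum_divide_distrib [symmetric])
  finally show ?thesis .
qed

theorem theorem13:
  fixes h k :: int
  assumes "coprime h k" and "odd h" and "odd k" and "k > 0"
  shows "B1 h k = real_of_int h / (4 * real_of_int k) * Y h k
                  + 1 / (2 * real_of_int k) - 1/2"
proof -
  define s where "s j = (-1::real) powi (h * j mod k)" for j
  define A where "A = (\<Sum>j\<in>{1..k-1}. s j * of_int j)"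
  obtain m where m: "k - 1 = 2 * int m"
  proof -
    from assms(3) obtain t where "k = 2 * t + 1" by (rule oddE)
    with assms(4) show ?thesis by (intro that [of "nat t"]) simp
  qed
  have bij: "bij_betw (\<lambda>j. h * j mod k) {1..k-1} {1..k-1}"
    using assms(1) by (rule bij_betw_mult_mod)
  have sum_s: "(\<Sum>j\<in>{1..k-1}. s j) = 0"
    using sum.reindex_bij_betw [OF bij, of "\<lambda>r. (-1::real) powi r"]
    by (simp add: s_def m sum_minus_one_powi_upto_even)
  have sum_s_mod: "(\<Sum>j\<in>{1..k-1}. s j * of_int (h * j mod k)) = of_nat m"
    using sum.reindex_bij_betw [OF bij, of "\<lambda>r. (-1::real) powi r * of_int r"]
    by (simp add: s_def m sum_minus_one_powi_times_upto_even)
  have m_real: "real m = (of_int k - 1) / 2"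
    using arg_cong [OF m, of real_of_int] by simp
  have B1: "B1 h k = (of_int h * A - of_nat m) / of_int k"
    unfolding B1_eq_sum_mod [OF assms(2-4)] s_def [symmetric] A_def sum_s_mod [symmetric]
    by (simp add: sum_divide_distrib [symmetric] sum_distrib_left sum_subtractf algebra_simps)
  have Y: "Y h k = 4 * A"
    unfolding Y_eq_sum_mod [OF assms(2-4)] s_def [symmetric] A_def
    by (simp add: right_diff_distrib sum_subtractf sum_divide_distrib [symmetric]
        sum_distrib_right [symmetric] sum_s)
  show ?thesis
    using assms(4) unfolding B1 Y m_real by (simp add: field_simps)
qed

end
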